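(* For every $n\ge 2$, it is possible to place $n-1$ queens on an $n\times n$ chessboard whose square $(i,j)$ ($1\le i,j\le n$) is labeled $|i-j|$ so that no two queens attack each other, where two queens attack each other if they lie in the same row, in the same column, or on squares with the same label.
   Context: The chessboard corresponds to the symmetric Toeplitz matrix $T_n$ with entries $t_{ij}=|i-j|$. *)

theory Defs
  imports Main
begin

definition board :: "nat \<Rightarrow> (nat \<times> nat) set" where
  "board n = {1..n} \<times> {1..n}"

definition label :: "nat \<times> nat \<Rightarrow> int" where
  "label p = \<bar>int (fst p) - int (snd p)\<bar>"

definition attacks :: "nat \<times> nat \<Rightarrow> nat \<times> nat \<Rightarrow> bool" where
  "attacks p q \<longleftrightarrow> fst p = fst q \<or> snd p = snd q \<or> label p = label q"

definition non_attacking :: "(nat \<times> nat) set \<Rightarrow> bool" where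
  "non_attacking Q \<longleftrightarrow> (\<forall>p\<in>Q. \<forall>q\<in>Q. p \<noteq> q \<longrightarrow> \<not> attacks p q)"

end

theory Submission
  imports Defs
begin

text \<open>Place the queens of label n - 1, n - 3, ... on the
  anti-diagonal i + j = n + 1 above the main diagonal, and those of label n - 2, n - 4, ...
  on the anti-diagonal i + j = n + 2 below it.  The first family occupies the top
  \<lfloor>n/2\<rfloor> rows and the right columns, the second family the bottom rows and the left
  columns, and the two families are separated by the parity of their labels.\<close>

lemma non_attacking_iff_inj_on:
  "non_attacking Q \<longleftrightarrow> inj_on fst Q \<and> inj_on snd Q \<and> inj_on label Q"
  unfolding non_attacking_def attacks_def inj_on_def by blast

lemma inj_on_Un_separated:
  assumes "inj_on f A" "inj_on f B" "f ` A \<subseteq> S" "f ` B \<subseteq> T" "S \<inter> T = {}"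
  shows "inj_on f (A \<union> B)"
  using assms by (auto simp: inj_on_Un)

definition upper_queens :: "nat \<Rightarrow> (nat \<times> nat) set" where
  "upper_queens n = (\<lambda>m. (m + 1, n - m)) ` {..<n div 2}"

definition lower_queens :: "nat \<Rightarrow> (nat \<times> nat) set" where
  "lower_queens n = (\<lambda>m. (n - m, m + 2)) ` {..<(n - 1) div 2}"

lemma label_upper_queen: "m < n div 2 \<Longrightarrow> label (Suc m, n - m) = int n - 1 - 2 * int m"
  unfolding label_def by simp

lemma label_lower_queen: "m < (n - 1) div 2 \<Longrightarrow> label (n - m, Suc (Suc m)) = int n - 2 - 2 * int m"
  unfolding label_def by simp

lemma queens_subset_board: "upper_queens n \<union> lower_queens n \<subseteq> board n"
  unfolding upper_queens_def lower_queens_def board_def by auto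

lemma card_queens:
  assumes "n \<ge> 1"
  shows "card (upper_queens n \<union> lower_queens n) = n - 1"
proof -
  have "card (upper_queens n \<union> lower_queens n) = card (upper_queens n) + card (lower_queens n)"
    unfolding upper_queens_def lower_queens_def by (rule card_Un_disjoint) auto
  also have "\<dots> = n div 2 + (n - 1) div 2"
    unfolding upper_queens_def lower_queens_def by (simp add: card_image inj_on_def)
  also have "\<dots> = n - 1"
    using assms by presburger
  finally show ?thesis .
qed

lemma rows_queens:
  "fst ` upper_queens n \<subseteq> {..n div 2}" "fst ` lower_queens n \<subseteq> {n div 2<..}"
  "inj_on fst (upper_queens n)" "inj_on fst (lower_queens n)"
  unfolding upper_queens_def lower_queens_def inj_on_def by auto

lemma columns_queens:
  "snd ` upper_queens n \<subseteq> {n - n div 2<..}" "snd ` lower_queens n \<subseteq> {..n - n div 2}"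
  "inj_on snd (upper_queens n)" "inj_on snd (lower_queens n)"
  unfolding upper_queens_def lower_queens_def inj_on_def by auto

lemma labels_queens:
  "label ` upper_queens n \<subseteq> {k. odd (int n - k)}" "label ` lower_queens n \<subseteq> {k. even (int n - k)}"
  "inj_on label (upper_queens n)" "inj_on label (lower_queens n)"
  unfolding upper_queens_def lower_queens_def inj_on_def
  by (auto simp: label_upper_queen label_lower_queen)

lemma non_attacking_queens: "non_attacking (upper_queens n \<union> lower_queens n)"
  unfolding non_attacking_iff_inj_on
proof (intro conjI)
  show "inj_on fst (upper_queens n \<union> lower_queens n)"
    by (rule inj_on_Un_separated[OF rows_queens(3,4,1,2)]) auto
  show "inj_on snd (upper_queens n \<union> lower_queens n)"
    by (rule inj_on_Un_separated[OF columns_queens(3,4,1,2)]) auto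
  show "inj_on label (upper_queens n \<union> lower_queens n)"
    by (rule inj_on_Un_separated[OF labels_queens(3,4,1,2)]) auto
qed

theorem theorem3:
  fixes n :: nat
  assumes "n \<ge> 2"
  shows "\<exists>Q. Q \<subseteq> board n \<and> card Q = n - 1 \<and> non_attacking Q"
proof (intro exI conjI)
  show "upper_queens n \<union> lower_queens n \<subseteq> board n"
    by (rule queens_subset_board)
  show "card (upper_queens n \<union> lower_queens n) = n - 1"
    using assms by (simp add: card_queens)
  show "non_attacking (upper_queens n \<union> lower_queens n)"
    by (rule non_attacking_queens)
qed

end
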